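(* On the six equivalence classes of type A faces $[F_{L_0}],[F_{L_1}],[F_{L_2}],[F_{L_3}],[F_{L_4}],[F_0]$, the relation $\Subset$ is exactly the reflexive–transitive closure of $F_{L_1}\Subset F_{L_0}$, $F_{L_2}\Subset F_{L_0}$, $F_{L_3}\Subset F_{L_1}$, $F_{L_3}\Subset F_{L_2}$, $F_{L_4}\Subset F_{L_2}$, $F_0\Subset F_{L_3}$, $F_0\Subset F_{L_4}$. In particular $F_{L_1},F_{L_2}$ are incomparable, $F_{L_3},F_{L_4}$ are incomparable, and $F_{L_4}\not\Subset F_{L_1}$.
   Context: $H_k\subseteq\mathbb R[x,y,z]$: real ternary forms of degree $k$; $P_{3,4}=\{f\in H_4: f\ge0\text{ on }\mathbb P^2(\mathbb R)\}$. $GL_3(\mathbb R)$ acts on forms by $(\sigma f)(a)=f(\sigma^{-1}a)$. For faces $F,G$ of $P_{3,4}$, $[F]\Subset[G]$ means there is $\sigma\in GL_3(\mathbb R)$ with $F\subseteq\sigma(G)$. For a real line $l'$ (identified with a defining linear form) and a projective linear subspace $U\subseteq\mathbb P^2(\mathbb R)$ (possibly empty), $F_{(l',U)}=\{l'^2g: g\in H_2,\ g\ge0\text{ on }\mathbb P^2(\mathbb R),\ g|_U=0\}$. Fix distinct real lines $l,k$, a point $p\in l$, and $q\in\mathbb P^2(\mathbb R)\setminus l$: $F_{L_0}=F_{(l,\emptyset)}$, $F_{L_1}=F_{(l,\{q\})}$, $F_{L_2}=F_{(l,\{p\})}$, $F_{L_3}=F_{(l,k)}$, $F_{L_4}=F_{(l,l)}$,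 $F_0=\{0\}$. *)

theory Defs
  imports "HOL-Analysis.Analysis"
begin

type_synonym form = "real^3 \<Rightarrow> real"

definition H :: "nat \<Rightarrow> form set" where
  "H k = {f. \<exists>c :: nat \<Rightarrow> nat \<Rightarrow> real.
      f = (\<lambda>a. \<Sum>i\<le>k. \<Sum>j\<le>k - i. c i j * (a$1)^i * (a$2)^j * (a$3)^(k - i - j))}"

definition act :: "real^3^3 \<Rightarrow> form \<Rightarrow> form" where
  "act \<sigma> f = (\<lambda>a. f (matrix_inv \<sigma> *v a))"

definition face_le :: "form set \<Rightarrow> form set \<Rightarrow> bool" where
  "face_le F G \<longleftrightarrow> (\<exists>\<sigma>. invertible \<sigma> \<and> F \<subseteq> act \<sigma> ` G)"

text \<open>F_(l',U): the line l' is given by its defining linear form a |-> l' . a;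
  the projective subspace U is given by its affine cone, a linear subspace of real^3
  (the empty projective subspace corresponds to {0}).\<close>
definition FlU :: "real^3 \<Rightarrow> (real^3) set \<Rightarrow> form set" where
  "FlU l' U = {f. \<exists>g \<in> H 2. (\<forall>a. g a \<ge> 0) \<and> (\<forall>a\<in>U. g a = 0)
                  \<and> f = (\<lambda>a. (l' \<bullet> a)^2 * g a)}"

text \<open>The six faces, indexed 0..5: F_{L_0},...,F_{L_4}, F_0.\<close>
definition typeA_face :: "real^3 \<Rightarrow> real^3 \<Rightarrow> real^3 \<Rightarrow> real^3 \<Rightarrow> nat \<Rightarrow> form set" where
  "typeA_face l k p q i =
     (if i = 0 then FlU l {0}
      else if i = 1 then FlU l (span {q})
      else if i = 2 then FlU l (span {p})
      else if i = 3 then FlU l {a. k \<bullet> a = 0}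
      else if i = 4 then FlU l {a. l \<bullet> a = 0}
      else {(\<lambda>a. 0)})"

text \<open>Generating relation on indices (i,j) meaning face i below face j.\<close>
definition typeA_gen :: "(nat \<times> nat) set" where
  "typeA_gen = {(1,0), (2,0), (3,1), (3,2), (4,2), (5,3), (5,4)}"

end

theory Submission
  imports Defs
begin

text \<open>
  The quadrics H 2 are exactly the quadratic forms a \<bullet> (A *v a), so every
  face FlU l U consists of the forms (l \<bullet> a)^2 g(a) with g a nonnegative quadratic form
  vanishing on U, and the relation face_le F G says that each element of F is obtained from
  an element of G by one fixed invertible linear substitution.

  Besides plain inclusions (FlU l U shrinks as U grows, and the zero
  form lies in every face), F_{L_3} lies below F_{L_1} and F_{L_2}: a shear fixing the
  linear form l moves q (resp. p) into the plane k = 0, and substituting by it maps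
  F_{L_3} into F_{L_1} (resp. F_{L_2}).

  Under a substitution the zero set of a form is replaced by its linear
  preimage.  So any property of zero sets that is stable under invertible linear preimages
  and holds throughout G holds throughout every face below G.  Four such properties separate
  the faces: being all of real^3, spanning real^3, being a linear subspace, and being
  invariant under a nonzero translation.  They yield six primitive non-relations; the main
  theorem follows since every other non-relation reduces to one of them by transitivity.
\<close>

section \<open>Quadratic forms\<close>

definition qf :: "form \<Rightarrow> bool" where
  "qf g \<longleftrightarrow> (\<exists>A::real^3^3. g = (\<lambda>a. a \<bullet> (A *v a)))"

lemma qf_expand:
  fixes a :: "real^3"
  shows "a \<bullet> ((A::real^3^3) *v a) =
    A$1$1*(a$1)^2 + A$2$2*(a$2)^2 + A$3$3*(a$3)^2 + (A$1$2+A$2$1)*a$1*a$2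
    + (A$1$3+A$3$1)*a$1*a$3 + (A$2$3+A$3$2)*a$2*a$3"
  by (simp add: inner_vec_def sum_3 matrix_vector_mult_def algebra_simps power2_eq_square)

lemma H2_expand:
  fixes a :: "real^3"
  shows "(\<Sum>i\<le>2. \<Sum>j\<le>2 - i. c i j * (a$1)^i * (a$2)^j * (a$3)^(2 - i - j)) =
    c 2 0 * (a$1)^2 + c 0 2 * (a$2)^2 + c 0 0 * (a$3)^2 + c 1 1 * a$1*a$2
    + c 1 0 * a$1*a$3 + c 0 1 * a$2*a$3"
  by (simp add: numeral_2_eq_2 algebra_simps power2_eq_square)

lemma H2_iff_qf: "g \<in> H 2 \<longleftrightarrow> qf g"
proof
  assume "g \<in> H 2"
  then obtain c where g: "g = (\<lambda>a. \<Sum>i\<le>2. \<Sum>j\<le>2 - i. c i j * (a$1)^i * (a$2)^j * (a$3)^(2 - i - j))"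
    unfolding H_def by blast
  define A :: "real^3^3" where "A = (\<chi> i j.
    if i = 1 \<and> j = 1 then c 2 0 else if i = 2 \<and> j = 2 then c 0 2
    else if i = 3 \<and> j = 3 then c 0 0 else if i = 1 \<and> j = 2 then c 1 1
    else if i = 1 \<and> j = 3 then c 1 0 else if i = 2 \<and> j = 3 then c 0 1 else 0)"
  have "g = (\<lambda>a. a \<bullet> (A *v a))"
    unfolding g H2_expand qf_expand by (rule ext) (simp add: A_def)
  then show "qf g" unfolding qf_def by blast
next
  assume "qf g"
  then obtain A :: "real^3^3" where g: "g = (\<lambda>a. a \<bullet> (A *v a))" unfolding qf_def by blast
  define c :: "nat \<Rightarrow> nat \<Rightarrow> real" where "c = (\<lambda>i j.
    if i = 2 \<and> j = 0 then A$1$1 else if i = 0 \<and> j = 2 then A$2$2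
    else if i = 0 \<and> j = 0 then A$3$3 else if i = 1 \<and> j = 1 then A$1$2+A$2$1
    else if i = 1 \<and> j = 0 then A$1$3+A$3$1 else A$2$3+A$3$2)"
  have "g = (\<lambda>a. \<Sum>i\<le>2. \<Sum>j\<le>2 - i. c i j * (a$1)^i * (a$2)^j * (a$3)^(2 - i - j))"
    unfolding g H2_expand qf_expand by (rule ext) (simp add: c_def)
  then show "g \<in> H 2" unfolding H_def by blast
qed

lemma inner_matrix_vector: "((M::real^3^3) *v a) \<bullet> y = a \<bullet> (transpose M *v y)"
  by (metis dot_lmul_matrix inner_commute transpose_matrix_vector)

lemma qf_comp: "qf g \<Longrightarrow> qf (\<lambda>a. g ((M::real^3^3) *v a))"
  unfolding qf_def
proof (elim exE)
  fix A :: "real^3^3" assume g: "g = (\<lambda>a. a \<bullet> (A *v a))"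
  have "\<And>a. (M *v a) \<bullet> (A *v (M *v a)) = a \<bullet> ((transpose M ** A ** M) *v a)"
    by (simp add: inner_matrix_vector matrix_vector_mul_assoc matrix_mul_assoc)
  then show "\<exists>B::real^3^3. (\<lambda>a. g (M *v a)) = (\<lambda>a. a \<bullet> (B *v a))" using g by auto
qed

lemma qf_zero: "qf (\<lambda>a. 0)"
  unfolding qf_def by (rule exI[of _ 0]) simp

lemma qf_square: "qf (\<lambda>a. (m \<bullet> a)^2)"
  unfolding qf_def
  by (rule exI[of _ "\<chi> i j. m$i * m$j"])
    (auto simp: inner_vec_def sum_3 matrix_vector_mult_def algebra_simps power2_eq_square)

lemma qf_norm: "qf (\<lambda>a. a \<bullet> a)"
  unfolding qf_def by (rule exI[of _ "mat 1"]) simp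

lemma qf_cross_norm: "qf (\<lambda>a. cross3 q a \<bullet> cross3 q a)"
proof -
  have "linear (cross3 q)" using bilinear_cross unfolding bilinear_def by blast
  then have "cross3 q a = matrix (cross3 q) *v a" for a by (simp add: matrix_works)
  then show ?thesis using qf_comp[OF qf_norm, of "matrix (cross3 q)"] by simp
qed

text \<open>Parallelogram law and homogeneity, the only two properties of quadratic forms used
  to study their zero sets.\<close>
lemma qf_parallelogram: "qf g \<Longrightarrow> g (x + y) + g (x - y) = 2 * g x + 2 * g y"
  unfolding qf_def by (auto simp: qf_expand algebra_simps power2_eq_square)

lemma qf_homogeneous: "qf g \<Longrightarrow> g (t *\<^sub>R x) = t^2 * g x"
  unfolding qf_def by (auto simp: qf_expand algebra_simps power2_eq_square)

lemma nonneg_qf_zero_set_subspace: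
  assumes qf: "qf g" and nonneg: "\<And>a. 0 \<le> g a"
  shows "subspace {a. g a = 0}"
proof (rule subspaceI)
  show "0 \<in> {a. g a = 0}" using qf_homogeneous[OF qf, of 0 0] by simp
next
  fix x y assume "x \<in> {a. g a = 0}" "y \<in> {a. g a = 0}"
  then have "g (x + y) + g (x - y) = 0" using qf_parallelogram[OF qf] by simp
  then show "x + y \<in> {a. g a = 0}" using nonneg[of "x + y"] nonneg[of "x - y"] by simp
next
  fix c x assume "x \<in> {a. g a = 0}"
  then show "c *\<^sub>R x \<in> {a. g a = 0}" using qf_homogeneous[OF qf] by simp
qed

lemma FlU_iff:
  "f \<in> FlU l U \<longleftrightarrow>
     (\<exists>g. qf g \<and> (\<forall>a. 0 \<le> g a) \<and> (\<forall>a\<in>U. g a = 0) \<and> f = (\<lambda>a. (l \<bullet> a)^2 * g a))"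
  by (auto simp: FlU_def H2_iff_qf)

lemma FlU_antimono: "V \<subseteq> U \<Longrightarrow> FlU l U \<subseteq> FlU l V"
  unfolding FlU_def by blast

lemma zero_in_FlU: "(\<lambda>a. 0) \<in> FlU l U"
  unfolding FlU_iff using qf_zero by force

lemma square_product_in_FlU: "(\<lambda>a. (l \<bullet> a)^2 * (m \<bullet> a)^2) \<in> FlU l {a. m \<bullet> a = 0}"
  unfolding FlU_iff using qf_square by fastforce

section \<open>Comparing faces by substitution\<close>

lemma matrix_inv_inverse:
  "invertible (A::'a::semiring_1^'n^'m) \<Longrightarrow> A ** matrix_inv A = mat 1 \<and> matrix_inv A ** A = mat 1"
  unfolding invertible_def matrix_inv_def by (rule someI_ex)

lemma matrix_inv_unique:
  fixes A :: "'a::semiring_1^'n^'m" and B :: "'a^'m^'n"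
  shows "A ** B = mat 1 \<Longrightarrow> B ** A = mat 1 \<Longrightarrow> matrix_inv A = B"
proof -
  assume AB: "A ** B = mat 1" and BA: "B ** A = mat 1"
  then have "matrix_inv A ** A = mat 1" using matrix_inv_inverse invertible_def by blast
  then have "matrix_inv A = matrix_inv A ** (A ** B)" using AB by simp
  also have "\<dots> = B" using \<open>matrix_inv A ** A = mat 1\<close> by (simp add: matrix_mul_assoc)
  finally show ?thesis .
qed

lemma matrix_inv_apply:
  assumes "invertible (A::'a::comm_semiring_1^'n^'m)"
  shows "A *v (matrix_inv A *v b) = b"
  using matrix_inv_inverse[OF assms] by (simp add: matrix_vector_mul_assoc)

lemma face_le_iff:
  "face_le F G \<longleftrightarrow> (\<exists>\<tau>::real^3^3. invertible \<tau> \<and> (\<forall>f\<in>F. \<exists>g\<in>G. f = (\<lambda>a. g (\<tau> *v a))))"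
proof
  assume "face_le F G"
  then obtain \<sigma> where \<sigma>: "invertible \<sigma>" "F \<subseteq> act \<sigma> ` G" unfolding face_le_def by blast
  have "invertible (matrix_inv \<sigma>)"
    using matrix_inv_inverse[OF \<sigma>(1)] unfolding invertible_def by blast
  with \<sigma>(2) show "\<exists>\<tau>. invertible \<tau> \<and> (\<forall>f\<in>F. \<exists>g\<in>G. f = (\<lambda>a. g (\<tau> *v a)))"
    unfolding act_def by blast
next
  assume "\<exists>\<tau>::real^3^3. invertible \<tau> \<and> (\<forall>f\<in>F. \<exists>g\<in>G. f = (\<lambda>a. g (\<tau> *v a)))"
  then obtain \<tau> :: "real^3^3" where \<tau>: "invertible \<tau>" "\<forall>f\<in>F. \<exists>g\<in>G. f = (\<lambda>a. g (\<tau> *v a))"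
    by blast
  have inv: "\<tau> ** matrix_inv \<tau> = mat 1" "matrix_inv \<tau> ** \<tau> = mat 1"
    using matrix_inv_inverse[OF \<tau>(1)] by auto
  then have "matrix_inv (matrix_inv \<tau>) = \<tau>" by (rule matrix_inv_unique[rotated])
  moreover have "invertible (matrix_inv \<tau>)" using inv unfolding invertible_def by blast
  ultimately show "face_le F G"
    using \<tau>(2) unfolding face_le_def act_def by (intro exI[of _ "matrix_inv \<tau>"]) auto
qed

lemma face_le_trans: "face_le F G \<Longrightarrow> face_le G K \<Longrightarrow> face_le F K"
  unfolding face_le_iff
proof (elim exE conjE)
  fix \<tau>1 \<tau>2 :: "real^3^3"
  assume 1: "invertible \<tau>1" "\<forall>f\<in>F. \<exists>g\<in>G. f = (\<lambda>a. g (\<tau>1 *v a))"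
    and 2: "invertible \<tau>2" "\<forall>f\<in>G. \<exists>g\<in>K. f = (\<lambda>a. g (\<tau>2 *v a))"
  have "\<forall>f\<in>F. \<exists>g\<in>K. f = (\<lambda>a. g ((\<tau>2 ** \<tau>1) *v a))"
    using 1(2) 2(2) by (fastforce simp: matrix_vector_mul_assoc[symmetric])
  with invertible_mult[OF 2(1) 1(1)]
  show "\<exists>\<tau>::real^3^3. invertible \<tau> \<and> (\<forall>f\<in>F. \<exists>g\<in>K. f = (\<lambda>a. g (\<tau> *v a)))" by blast
qed

lemma face_le_subset: "F \<subseteq> G \<Longrightarrow> face_le F G"
  unfolding face_le_iff by (rule exI[of _ "mat 1"]) (auto simp: invertible_def)

section \<open>Positive relations: shears fixing the line\<close>

lemma face_le_by_substitution:
  assumes M: "invertible M" and fix_l: "\<And>b. l \<bullet> (M *v b) = l \<bullet> b"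
    and maps: "\<And>v. v \<in> V \<Longrightarrow> M *v v \<in> U"
  shows "face_le (FlU l U) (FlU l V)"
  unfolding face_le_iff
proof (intro exI conjI ballI)
  show "invertible (matrix_inv M)"
    using matrix_inv_inverse[OF M] unfolding invertible_def by blast
  fix f assume "f \<in> FlU l U"
  then obtain g where g: "qf g" "\<forall>a. 0 \<le> g a" "\<forall>a\<in>U. g a = 0"
    and f: "f = (\<lambda>a. (l \<bullet> a)^2 * g a)"
    unfolding FlU_iff by blast
  let ?h = "\<lambda>b. (l \<bullet> b)^2 * g (M *v b)"
  show "\<exists>h\<in>FlU l V. f = (\<lambda>a. h (matrix_inv M *v a))"
  proof (rule bexI[of _ ?h])
    show "?h \<in> FlU l V"
      unfolding FlU_iff using g maps qf_comp[OF g(1)] by blast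
    show "f = (\<lambda>a. ?h (matrix_inv M *v a))"
      using f fix_l[of "matrix_inv M *v _"] by (simp add: matrix_inv_apply[OF M])
  qed
qed

text \<open>The shear b \<mapsto> b + (v \<bullet> b) u; for v \<bullet> u = 0 it is invertible with inverse
  shear (-u) v, and it fixes every linear form vanishing at u.\<close>
definition shear :: "real^3 \<Rightarrow> real^3 \<Rightarrow> real^3^3" where
  "shear u v = mat 1 + (\<chi> i j. u$i * v$j)"

lemma shear_apply: "shear u v *v b = b + (v \<bullet> b) *\<^sub>R u"
  unfolding shear_def
  by (simp add: matrix_vector_mult_add_rdistrib vec_eq_iff matrix_vector_mult_def
      inner_vec_def sum_3 algebra_simps mat_def forall_3)

lemma shear_invertible:
  assumes "v \<bullet> u = 0"
  shows "invertible (shear u v)"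
proof -
  have "shear (-u) v ** shear u v = mat 1"
    unfolding matrix_eq using assms
    by (simp add: matrix_vector_mul_assoc[symmetric] shear_apply inner_add_right)
  then show ?thesis unfolding invertible_left_inverse by blast
qed

lemma functional_one_on_two:
  assumes "cross3 x y \<noteq> 0"
  shows "\<exists>v. v \<bullet> x = 1 \<and> v \<bullet> y = 1"
proof -
  define D where "D = (x \<bullet> x) * (y \<bullet> y) - (x \<bullet> y)^2"
  have "D = cross3 x y \<bullet> cross3 x y"
    using norm_cross_dot[of x y] by (simp add: D_def power2_norm_eq_inner[symmetric] power_mult_distrib)
  then have D: "D \<noteq> 0" using assms by simp
  define v where "v = ((y \<bullet> y - x \<bullet> y) / D) *\<^sub>R x + ((x \<bullet> x - x \<bullet> y) / D) *\<^sub>R y"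
  have "v \<bullet> x = ((y \<bullet> y - x \<bullet> y) * (x \<bullet> x) + (x \<bullet> x - x \<bullet> y) * (x \<bullet> y)) / D"
    unfolding v_def by (simp add: inner_add_left inner_commute[of y x] add_divide_distrib)
  also have "\<dots> = 1" using D unfolding D_def by (simp add: algebra_simps power2_eq_square)
  moreover have "v \<bullet> y = ((y \<bullet> y - x \<bullet> y) * (x \<bullet> y) + (x \<bullet> x - x \<bullet> y) * (y \<bullet> y)) / D"
    unfolding v_def by (simp add: inner_add_left inner_commute[of y x] add_divide_distrib)
  moreover have "\<dots> = 1" using D unfolding D_def by (simp add: algebra_simps power2_eq_square)
  ultimately show ?thesis by metis
qed

lemma shear_moving_point:
  assumes indep: "cross3 x y \<noteq> 0" and level: "l \<bullet> x = l \<bullet> y"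
  shows "\<exists>M. invertible M \<and> M *v x = y \<and> (\<forall>b. l \<bullet> (M *v b) = l \<bullet> b)"
proof -
  obtain v where v: "v \<bullet> x = 1" "v \<bullet> y = 1" using functional_one_on_two[OF indep] by blast
  have "v \<bullet> (y - x) = 0" "l \<bullet> (y - x) = 0" using v level by (simp_all add: inner_diff_right)
  then show ?thesis
    using v shear_invertible
    by (intro exI[of _ "shear (y - x) v"]) (auto simp: shear_apply inner_add_right)
qed

lemma cross_zero_proportional: "cross3 x y = 0 \<Longrightarrow> x \<noteq> 0 \<Longrightarrow> \<exists>c. y = c *\<^sub>R x"
  using cross_eq_0 collinear_lemma by (metis scale_zero_left)

lemma face_le_plane_point:
  assumes x: "x \<noteq> 0" and r: "r \<noteq> 0" "k \<bullet> r = 0" and level: "l \<bullet> r = l \<bullet> x"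
  shows "face_le (FlU l {a. k \<bullet> a = 0}) (FlU l (span {x}))"
proof (cases "cross3 x r = 0")
  case True
  then obtain c where "r = c *\<^sub>R x" using cross_zero_proportional x by blast
  with r have "k \<bullet> x = 0" by auto
  then have "span {x} \<subseteq> {a. k \<bullet> a = 0}" by (auto simp: span_singleton)
  then show ?thesis by (intro face_le_subset FlU_antimono)
next
  case False
  then obtain M where M: "invertible M" "M *v x = r" "\<forall>b. l \<bullet> (M *v b) = l \<bullet> b"
    using shear_moving_point level by metis
  show ?thesis
    using M r by (intro face_le_by_substitution[of M]) (auto simp: span_singleton matrix_vector_mult_scaleR)
qed

lemma proportional_if_hyperplane_subset:
  fixes m l :: "'a::real_inner"
  assumes m: "m \<noteq> 0" and sub: "\<And>a. m \<bullet> a = 0 \<Longrightarrow> l \<bullet> a = 0"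
  shows "\<exists>c. l = c *\<^sub>R m"
proof -
  define c where "c = (l \<bullet> m) / (m \<bullet> m)"
  define d where "d = l - c *\<^sub>R m"
  have "m \<bullet> d = 0" using m by (simp add: c_def d_def inner_diff_right inner_commute)
  then have "l \<bullet> d = 0" by (rule sub)
  then have "d \<bullet> d = 0" using \<open>m \<bullet> d = 0\<close> by (simp add: d_def inner_diff_left)
  then show ?thesis by (auto simp: d_def)
qed

lemma point_in_plane_off_line:
  fixes l k :: "'a::real_inner"
  assumes "l \<noteq> 0" "k \<noteq> 0" "\<not> (\<exists>c. k = c *\<^sub>R l)"
  shows "\<exists>r. k \<bullet> r = 0 \<and> l \<bullet> r \<noteq> 0"
proof (rule ccontr)
  assume "\<not> ?thesis"
  then have "\<And>a. k \<bullet> a = 0 \<Longrightarrow> l \<bullet> a = 0" by blast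
  then have "\<exists>c. l = c *\<^sub>R k" by (rule proportional_if_hyperplane_subset[OF assms(2)])
  then obtain c where c: "l = c *\<^sub>R k" by blast
  with assms(1) have "k = (1 / c) *\<^sub>R l" by auto
  with assms(3) show False by blast
qed

lemma face_le_L3_L1:
  assumes "l \<noteq> 0" "k \<noteq> 0" "\<not> (\<exists>c. k = c *\<^sub>R l)" and q: "l \<bullet> q \<noteq> 0"
  shows "face_le (FlU l {a. k \<bullet> a = 0}) (FlU l (span {q}))"
proof -
  obtain r where r: "k \<bullet> r = 0" "l \<bullet> r \<noteq> 0" using point_in_plane_off_line assms(1-3) by blast
  let ?r = "((l \<bullet> q) / (l \<bullet> r)) *\<^sub>R r"
  have "k \<bullet> ?r = 0" "l \<bullet> ?r = l \<bullet> q" using r by simp_all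
  moreover have "q \<noteq> 0" "?r \<noteq> 0" using calculation(2) q by auto
  ultimately show ?thesis using face_le_plane_point[where x = q and r = ?r] by blast
qed

lemma face_le_L3_L2:
  assumes "l \<noteq> 0" "\<not> (\<exists>c. k = c *\<^sub>R l)" and p: "p \<noteq> 0" "l \<bullet> p = 0"
  shows "face_le (FlU l {a. k \<bullet> a = 0}) (FlU l (span {p}))"
proof (rule face_le_plane_point[OF p(1)])
  show "cross3 l k \<noteq> 0" using cross_zero_proportional assms(1,2) by blast
  show "k \<bullet> cross3 l k = 0" "l \<bullet> cross3 l k = l \<bullet> p" using p(2) dot_cross_self by simp_all
qed

section \<open>Negative relations: invariants of zero sets\<close>

lemma not_face_le_by_zero_sets:
  assumes "f \<in> F" and "\<not> P {a. f a = 0}" and "\<And>g. g \<in> G \<Longrightarrow> P {a. g a = 0}"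
    and "\<And>\<tau> S. invertible (\<tau>::real^3^3) \<Longrightarrow> P S \<Longrightarrow> P ((\<lambda>a. \<tau> *v a) -` S)"
  shows "\<not> face_le F G"
proof
  assume "face_le F G"
  then obtain \<tau> g where "invertible \<tau>" "g \<in> G" "f = (\<lambda>a. g (\<tau> *v a))"
    using assms(1) unfolding face_le_iff by blast
  then have "{a. f a = 0} = (\<lambda>a. \<tau> *v a) -` {b. g b = 0}" "P {b. g b = 0}"
    using assms(3) by auto
  then show False using assms(2,4) \<open>invertible \<tau>\<close> by metis
qed

lemma span_vimage_invertible:
  assumes "invertible (\<tau>::real^'n^'n)" "span S = UNIV"
  shows "span ((\<lambda>a. \<tau> *v a) -` S) = UNIV"
proof -
  have "(\<lambda>a. \<tau> *v a) -` S = (\<lambda>b. matrix_inv \<tau> *v b) ` S"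
    using matrix_inv_inverse[OF assms(1)] by (force simp: matrix_vector_mul_assoc)
  moreover have "surj (\<lambda>b. matrix_inv \<tau> *v b)"
    using matrix_inv_inverse[OF assms(1)] by (metis matrix_vector_mul_assoc matrix_vector_mul_lid surjI)
  ultimately show ?thesis using assms(2) by (simp add: span_linear_image)
qed

definition has_nonzero_period :: "'a::real_vector set \<Rightarrow> bool" where
  "has_nonzero_period S \<longleftrightarrow> (\<exists>x. x \<noteq> 0 \<and> (\<forall>z\<in>S. z + x \<in> S))"

lemma period_vimage_invertible:
  assumes "invertible (\<tau>::real^'n^'n)" "has_nonzero_period S"
  shows "has_nonzero_period ((\<lambda>a. \<tau> *v a) -` S)"
proof -
  obtain x where x: "x \<noteq> 0" "\<forall>z\<in>S. z + x \<in> S" using assms(2) unfolding has_nonzero_period_def by blast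
  let ?x = "matrix_inv \<tau> *v x"
  have "\<tau> *v ?x = x" by (rule matrix_inv_apply[OF assms(1)])
  then show ?thesis
    unfolding has_nonzero_period_def using x
    by (intro exI[of _ ?x]) (auto simp: matrix_vector_right_distrib)
qed

lemma span_plane_and_point:
  assumes x: "l \<bullet> x \<noteq> 0" "x \<in> S" and plane: "{a. l \<bullet> a = 0} \<subseteq> S"
  shows "span S = UNIV"
proof -
  have "a \<in> span S" for a
  proof -
    let ?t = "(l \<bullet> a) / (l \<bullet> x)"
    have "a - ?t *\<^sub>R x \<in> S" using plane x(1) by (auto simp: inner_diff_right)
    then have "(a - ?t *\<^sub>R x) + ?t *\<^sub>R x \<in> span S"
      using x(2) by (intro span_add span_scale span_base)
    then show ?thesis by simp
  qed
  then show ?thesis by blast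
qed

lemma plane_not_spanning:
  fixes l :: "'a::real_inner"
  assumes "l \<noteq> 0"
  shows "span {a. l \<bullet> a = 0} \<noteq> UNIV"
proof
  assume "span {a. l \<bullet> a = 0} = UNIV"
  then have "{a. l \<bullet> a = 0} = UNIV"
    using span_eq_iff[THEN iffD2, OF subspace_hyperplane[of l]] by simp
  then have "l \<bullet> l = 0" by blast
  with assms show False by simp
qed

lemma product_of_linear_forms_nonzero:
  fixes l m :: "'a::real_inner"
  assumes "l \<noteq> 0" "m \<noteq> 0"
  shows "\<exists>a. (l \<bullet> a)^2 * (m \<bullet> a)^2 \<noteq> 0"
proof (cases "l \<bullet> m = 0")
  case True
  then have "(l \<bullet> (l + m))^2 * (m \<bullet> (l + m))^2 \<noteq> 0"
    using assms by (simp add: inner_add_right inner_commute)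
  then show ?thesis by blast
next
  case False
  then have "(l \<bullet> m)^2 * (m \<bullet> m)^2 \<noteq> 0" using assms by simp
  then show ?thesis by blast
qed

lemma FlU_zero_sets_span:
  assumes "x \<in> U" "l \<bullet> x \<noteq> 0" "f \<in> FlU l U"
  shows "span {a. f a = 0} = UNIV"
  using assms unfolding FlU_iff by (intro span_plane_and_point[of l x]) auto

lemma FlU_plane_zero_sets_subspace:
  assumes "f \<in> FlU l {a. l \<bullet> a = 0}"
  shows "subspace {a. f a = 0}"
proof -
  obtain g where g: "qf g" "\<forall>a. 0 \<le> g a" "\<forall>a. l \<bullet> a = 0 \<longrightarrow> g a = 0"
    and f: "f = (\<lambda>a. (l \<bullet> a)^2 * g a)"
    using assms unfolding FlU_iff by auto
  have "{a. f a = 0} = {a. g a = 0}" using f g(3) by auto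
  then show ?thesis using nonneg_qf_zero_set_subspace g(1,2) by simp
qed

lemma FlU_zero_sets_period:
  assumes p: "p \<noteq> 0" "l \<bullet> p = 0" "p \<in> U" and "f \<in> FlU l U"
  shows "has_nonzero_period {a. f a = 0}"
proof -
  obtain g where g: "qf g" "\<forall>a. 0 \<le> g a" "\<forall>a\<in>U. g a = 0"
    and f: "f = (\<lambda>a. (l \<bullet> a)^2 * g a)"
    using assms(4) unfolding FlU_iff by blast
  have "subspace {a. g a = 0}" using nonneg_qf_zero_set_subspace g(1,2) by blast
  then have "g z = 0 \<Longrightarrow> g (z + p) = 0" for z using g(3) p(3) subspace_add by blast
  then have "\<forall>z\<in>{a. f a = 0}. z + p \<in> {a. f a = 0}"
    using f p(2) by (auto simp: inner_add_right)
  then show ?thesis unfolding has_nonzero_period_def using p(1) by blast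
qed

lemma cross_form_in_FlU: "(\<lambda>a. (l \<bullet> a)^2 * (cross3 q a \<bullet> cross3 q a)) \<in> FlU l (span {q})"
  unfolding FlU_iff using qf_cross_norm
  by (intro exI[of _ "\<lambda>a. cross3 q a \<bullet> cross3 q a"]) (auto simp: span_singleton cross_mult_right)

lemma cross_form_zero_set:
  assumes "q \<noteq> 0"
  shows "{a. (l \<bullet> a)^2 * (cross3 q a \<bullet> cross3 q a) = 0} = {a. l \<bullet> a = 0 \<or> (\<exists>t. a = t *\<^sub>R q)}"
  using cross_zero_proportional[OF _ assms] by (auto simp: cross_mult_right)

text \<open>A plane together with a line off it has no nonzero period: translating a point of
  one of them by a nonzero vector of the other leaves both.\<close>
lemma plane_and_line_no_period:
  fixes l q :: "real^3"
  assumes q: "l \<bullet> q \<noteq> 0"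
  shows "\<not> has_nonzero_period {a. l \<bullet> a = 0 \<or> (\<exists>t. a = t *\<^sub>R q)}" (is "\<not> has_nonzero_period ?Z")
proof
  have off: "u + s *\<^sub>R q \<notin> ?Z" if "u \<noteq> 0" "l \<bullet> u = 0" "s \<noteq> 0" for u s
  proof
    assume "u + s *\<^sub>R q \<in> ?Z"
    moreover have "l \<bullet> (u + s *\<^sub>R q) \<noteq> 0" using that q by (simp add: inner_add_right)
    ultimately obtain t where "u + s *\<^sub>R q = t *\<^sub>R q" by blast
    then have "u = (t - s) *\<^sub>R q" by (simp add: algebra_simps)
    then show False using that q by auto
  qed
  assume "has_nonzero_period ?Z"
  then obtain x where x: "x \<noteq> 0" "\<forall>z\<in>?Z. z + x \<in> ?Z" unfolding has_nonzero_period_def by blast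
  have "0 + x \<in> ?Z" by (rule bspec[OF x(2)]) simp
  then have "x \<in> ?Z" by (simp only: add_0)
  show False
  proof (cases "l \<bullet> x = 0")
    case True
    have "q + x \<in> ?Z" by (rule bspec[OF x(2)]) (simp add: exI[of _ 1])
    then have "x + 1 *\<^sub>R q \<in> ?Z" by (simp only: scaleR_one add.commute[of x q])
    moreover have "x + 1 *\<^sub>R q \<notin> ?Z" by (rule off) (use x(1) True in simp_all)
    ultimately show False by contradiction
  next
    case False
    with \<open>x \<in> ?Z\<close> obtain s where s: "x = s *\<^sub>R q" by blast
    with x(1) have "s \<noteq> 0" by auto
    have "2 \<le> DIM(real^3)" by simp
    then obtain z :: "real^3" where z: "z \<noteq> 0" "orthogonal l z"
      by (rule orthogonal_to_vector_exists)
    then have lz: "l \<bullet> z = 0" by (simp add: orthogonal_def)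
    have "z + x \<in> ?Z" by (rule bspec[OF x(2)]) (simp add: lz)
    then have "z + s *\<^sub>R q \<in> ?Z" by (simp only: s)
    moreover have "z + s *\<^sub>R q \<notin> ?Z" by (rule off[OF z(1) lz \<open>s \<noteq> 0\<close>])
    ultimately show False by contradiction
  qed
qed

text \<open>F_{L_3} and F_{L_4} are not below the zero face: they contain l^2 m^2 with m = k or
  m = l, whose zero set is not everything.\<close>
lemma FlU_not_below_zero_face:
  assumes "l \<noteq> 0" "m \<noteq> 0"
  shows "\<not> face_le (FlU l {a. m \<bullet> a = 0}) {\<lambda>a. 0}"
proof (rule not_face_le_by_zero_sets[OF square_product_in_FlU, where P = "\<lambda>S. S = UNIV"])
  show "{a. (l \<bullet> a)^2 * (m \<bullet> a)^2 = 0} \<noteq> UNIV"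
    using product_of_linear_forms_nonzero[OF assms] by blast
qed auto

text \<open>F_{L_4} is not below a face F_(l,U) with U meeting the complement of the plane l = 0
  (such as F_{L_3} and F_{L_1}): zero sets of the latter span real^3, the zero set of
  l^4 does not.\<close>
lemma FlU_l_not_below_spanning:
  assumes l: "l \<noteq> 0" and x: "x \<in> U" "l \<bullet> x \<noteq> 0"
  shows "\<not> face_le (FlU l {a. l \<bullet> a = 0}) (FlU l U)"
proof (rule not_face_le_by_zero_sets[OF square_product_in_FlU, where P = "\<lambda>S. span S = UNIV"])
  have "{a. (l \<bullet> a)^2 * (l \<bullet> a)^2 = 0} = {a. l \<bullet> a = 0}" by simp
  then show "span {a. (l \<bullet> a)^2 * (l \<bullet> a)^2 = 0} \<noteq> UNIV" using plane_not_spanning[OF l] by simp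
  show "span {a. g a = 0} = UNIV" if "g \<in> FlU l U" for g
    using FlU_zero_sets_span[OF x that] .
qed (fact span_vimage_invertible)

text \<open>F_{L_3} is not below F_{L_4}: zero sets of the latter are subspaces, while the zero
  set of l^2 k^2 is the union of two distinct planes.\<close>
lemma FlU_k_not_below_FlU_l:
  assumes l: "l \<noteq> 0" and k: "k \<noteq> 0" "\<not> (\<exists>c. k = c *\<^sub>R l)"
  shows "\<not> face_le (FlU l {a. k \<bullet> a = 0}) (FlU l {a. l \<bullet> a = 0})"
proof (rule not_face_le_by_zero_sets[OF square_product_in_FlU, where P = subspace])
  obtain r where "k \<bullet> r = 0" "l \<bullet> r \<noteq> 0" using point_in_plane_off_line l k by blast
  then have "span {a. (l \<bullet> a)^2 * (k \<bullet> a)^2 = 0} = UNIV"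
    by (intro span_plane_and_point[of l r]) auto
  moreover obtain a where "(l \<bullet> a)^2 * (k \<bullet> a)^2 \<noteq> 0"
    using product_of_linear_forms_nonzero[OF l k(1)] by blast
  ultimately show "\<not> subspace {a. (l \<bullet> a)^2 * (k \<bullet> a)^2 = 0}"
    using span_eq_iff[of "{a. (l \<bullet> a)^2 * (k \<bullet> a)^2 = 0}"] by blast
qed (simp_all add: FlU_plane_zero_sets_subspace linear_subspace_vimage)

text \<open>F_{L_1} is not below F_{L_2}: zero sets of the latter are invariant under
  translation by p, while the zero set of l^2 |q \<times> a|^2 has no nonzero period.\<close>
lemma FlU_q_not_below_FlU_p:
  assumes p: "p \<noteq> 0" "l \<bullet> p = 0" and q: "l \<bullet> q \<noteq> 0"
  shows "\<not> face_le (FlU l (span {q})) (FlU l (span {p}))"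
proof (rule not_face_le_by_zero_sets[OF cross_form_in_FlU, where P = has_nonzero_period])
  have "q \<noteq> 0" using q by auto
  show "\<not> has_nonzero_period {a. (l \<bullet> a)^2 * (cross3 q a \<bullet> cross3 q a) = 0}"
    unfolding cross_form_zero_set[OF \<open>q \<noteq> 0\<close>] by (rule plane_and_line_no_period[OF q])
qed (simp_all add: FlU_zero_sets_period[OF p span_base[OF singletonI]] period_vimage_invertible)

text \<open>Six primitive non-relations (pairs (i, j) with F_i not below F_j); all others follow
  from them by transitivity.\<close>
definition typeA_nonrel :: "(nat \<times> nat) set" where
  "typeA_nonrel = {(3,5), (4,5), (3,4), (4,3), (4,1), (1,2)}"

lemma typeA_gen_rtrancl:
  "(i, j) \<in> typeA_gen\<^sup>* \<longleftrightarrow>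
     i = j \<or> (i, j) \<in> {(1,0), (2,0), (3,0), (3,1), (3,2), (4,0), (4,2), (5,0), (5,1), (5,2), (5,3), (5,4)}"
  (is "_ \<longleftrightarrow> i = j \<or> (i, j) \<in> ?C")
proof
  assume "(i, j) \<in> typeA_gen\<^sup>*"
  then show "i = j \<or> (i, j) \<in> ?C"
  proof (induction rule: rtrancl_induct)
    case (step y z)
    from step(2) have "(y, z) \<in> {(1,0), (2,0), (3,1), (3,2), (4,2), (5,3), (5,4)}"
      by (simp add: typeA_gen_def)
    then show ?case using step(3) by (elim insertE emptyE; simp; blast)
  qed simp
next
  have gen: "(1,0) \<in> typeA_gen\<^sup>*" "(2,0) \<in> typeA_gen\<^sup>*" "(3,1) \<in> typeA_gen\<^sup>*" "(3,2) \<in> typeA_gen\<^sup>*"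
    "(4,2) \<in> typeA_gen\<^sup>*" "(5,3) \<in> typeA_gen\<^sup>*" "(5,4) \<in> typeA_gen\<^sup>*"
    by (rule r_into_rtrancl, simp add: typeA_gen_def)+
  then have "(3,0) \<in> typeA_gen\<^sup>*" "(4,0) \<in> typeA_gen\<^sup>*" "(5,0) \<in> typeA_gen\<^sup>*"
    "(5,1) \<in> typeA_gen\<^sup>*" "(5,2) \<in> typeA_gen\<^sup>*"
    by (meson rtrancl_trans)+
  with gen show "i = j \<or> (i, j) \<in> ?C \<Longrightarrow> (i, j) \<in> typeA_gen\<^sup>*" by auto
qed

text \<open>Every pair outside the closure is reduced to a primitive non-relation by moving the
  left face down and the right face up.\<close>
lemma typeA_nonrel_generate:
  assumes "i < 6" "j < 6" "(i, j) \<notin> typeA_gen\<^sup>*"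
  shows "\<exists>(i', j') \<in> typeA_nonrel. (i', i) \<in> typeA_gen\<^sup>* \<and> (j, j') \<in> typeA_gen\<^sup>*"
proof -
  from assms(1,2) have "i \<in> {0,1,2,3,4,5}" "j \<in> {0,1,2,3,4,5}" by auto
  then show ?thesis
    using assms(3) unfolding typeA_gen_rtrancl typeA_nonrel_def by (elim insertE emptyE) simp_all
qed

context
  fixes l k p q :: "real^3"
  assumes l: "l \<noteq> 0" and k: "k \<noteq> 0" "\<not> (\<exists>c. k = c *\<^sub>R l)"
    and p: "p \<noteq> 0" "l \<bullet> p = 0"
    and q: "l \<bullet> q \<noteq> 0"
begin

lemma typeA_gen_face_le:
  assumes "(i, j) \<in> typeA_gen"
  shows "face_le (typeA_face l k p q i) (typeA_face l k p q j)"
proof -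
  let ?T = "typeA_face l k p q"
  have "span {p} \<subseteq> {a. l \<bullet> a = 0}" using p(2) by (auto simp: span_singleton)
  then have "face_le (?T 4) (?T 2)" unfolding typeA_face_def by (simp add: face_le_subset FlU_antimono)
  moreover have "face_le (?T 1) (?T 0)" "face_le (?T 2) (?T 0)"
    unfolding typeA_face_def by (simp_all add: face_le_subset FlU_antimono span_zero)
  moreover have "face_le (?T 3) (?T 1)" "face_le (?T 3) (?T 2)"
    unfolding typeA_face_def using face_le_L3_L1[OF l k q] face_le_L3_L2[OF l k(2) p] by simp_all
  moreover have "face_le (?T 5) (?T 3)" "face_le (?T 5) (?T 4)"
    unfolding typeA_face_def by (simp_all add: face_le_subset zero_in_FlU)
  ultimately show ?thesis using assms unfolding typeA_gen_def by auto
qed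

lemma typeA_nonrel_not_face_le:
  assumes "(i, j) \<in> typeA_nonrel"
  shows "\<not> face_le (typeA_face l k p q i) (typeA_face l k p q j)"
proof -
  let ?T = "typeA_face l k p q"
  obtain r where r: "k \<bullet> r = 0" "l \<bullet> r \<noteq> 0" using point_in_plane_off_line l k by blast
  have "\<not> face_le (?T 3) (?T 5)" "\<not> face_le (?T 4) (?T 5)"
    unfolding typeA_face_def using FlU_not_below_zero_face[OF l] k(1) l by simp_all
  moreover have "\<not> face_le (?T 4) (?T 3)" "\<not> face_le (?T 4) (?T 1)"
    unfolding typeA_face_def using FlU_l_not_below_spanning[OF l] r q span_base[of q "{q}"] by simp_all
  moreover have "\<not> face_le (?T 3) (?T 4)"
    unfolding typeA_face_def using FlU_k_not_below_FlU_l[OF l k] by simp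
  moreover have "\<not> face_le (?T 1) (?T 2)"
    unfolding typeA_face_def using FlU_q_not_below_FlU_p[OF p q] by simp
  ultimately show ?thesis using assms unfolding typeA_nonrel_def by auto
qed

end

theorem mainTheorem19:
  fixes l k p q :: "real^3"
  assumes "l \<noteq> 0" and "k \<noteq> 0" and "\<not> (\<exists>c. k = c *\<^sub>R l)"
    and "p \<noteq> 0" and "l \<bullet> p = 0"
    and "l \<bullet> q \<noteq> 0"
  shows "\<forall>i<6. \<forall>j<6.
           face_le (typeA_face l k p q i) (typeA_face l k p q j) \<longleftrightarrow> (i, j) \<in> typeA_gen\<^sup>*"
proof -
  let ?T = "typeA_face l k p q"
  have below: "face_le (?T i) (?T j)" if "(i, j) \<in> typeA_gen\<^sup>*" for i j
    using that
  proof (induction rule: rtrancl_induct)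
    case base
    show ?case by (rule face_le_subset) simp
  next
    case (step j j')
    show ?case using step.IH typeA_gen_face_le[OF assms step.hyps(2)] by (rule face_le_trans)
  qed
  have not_below: "\<not> face_le (?T i) (?T j)" if outside: "i < 6" "j < 6" "(i, j) \<notin> typeA_gen\<^sup>*" for i j
  proof -
    obtain i' j' where nonrel: "(i', j') \<in> typeA_nonrel"
      and up: "(i', i) \<in> typeA_gen\<^sup>*" and down: "(j, j') \<in> typeA_gen\<^sup>*"
      using typeA_nonrel_generate[OF outside] by blast
    show ?thesis
    proof
      assume "face_le (?T i) (?T j)"
      then have "face_le (?T i') (?T j')"
        by (rule face_le_trans[OF face_le_trans[OF below[OF up]] below[OF down]])
      then show False using typeA_nonrel_not_face_le[OF assms nonrel] by contradiction
    qed
  qed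
  show ?thesis
  proof (intro allI impI)
    fix i j :: nat
    assume "i < 6" "j < 6"
    then show "face_le (?T i) (?T j) \<longleftrightarrow> (i, j) \<in> typeA_gen\<^sup>*"
      using below[of i j] not_below[of i j] by blast
  qed
qed

end
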